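(* Let $X$ and $R$ be finite sets, $\mathcal F$ a finite family of functions $f:X\to\{0,1\}$, $\mathcal D$ a probability distribution on $\mathcal F$ assigning probability $P_f$ to $f$, and $G:\mathcal F\times R\to X$ a heuristic. For $f\in\mathcal F$ let $h_f=|\{r\in R: f(G(f,r))=1\}|$, and assume $h_f>0$ whenever $P_f>0$. Let $T=\sum_{f\in\mathcal F}P_f\,|R|/h_f$ be the expected number of evaluations of $r\mapsto f(G(f,r))$ used by the classical procedure that repeatedly picks a uniformly random seed $r\in R$ until $f(G(f,r))=1$, for $f$ drawn from $\mathcal D$. Then there is a quantum algorithm that, for $f$ drawn from $\mathcal D$, finds $x_0\in X$ with $f(x_0)=1$ using an expected number (over $\mathcal D$ and the algorithm's randomness) of evaluations of $r\mapsto f(G(f,r))$ that is in $O(\sqrt T)$.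
   Context: Evaluations of $r\mapsto f(G(f,r))$ by the quantum algorithm may be made in superposition (as the reversible/unitary implementation of this Boolean function on the seed register). *)

theory Defs
  imports "HOL-Probability.Probability"
begin

text \<open>A minimal model of quantum query algorithms with classical (randomised) control.
  The quantum register has computational basis states (r, b, w): a seed r, a query
  target bit b, and a workspace index w < m.\<close>

type_synonym basis = "nat \<times> bool \<times> nat"
type_synonym qvec = "basis \<Rightarrow> complex"
type_synonym qop = "basis \<Rightarrow> basis \<Rightarrow> complex"

text \<open>A circuit: initial (normalised) state, followed by k blocks "query gate, then unitary";
  it uses exactly k queries and ends with a full computational-basis measurement.\<close>
type_synonym circuit = "qvec \<times> qop list"

datatype action = Halt nat | Run circuit

text \<open>Histories are stored most-recent-first: a list of (circuit run, measurement outcome).\<close>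
type_synonym history = "(circuit \<times> basis) list"

definition qcarrier :: "nat set \<Rightarrow> nat \<Rightarrow> basis set" where
  "qcarrier R m = R \<times> UNIV \<times> {..<m}"

definition apply_op :: "basis set \<Rightarrow> qop \<Rightarrow> qvec \<Rightarrow> qvec" where
  "apply_op S U v = (\<lambda>i. if i \<in> S then (\<Sum>j\<in>S. U i j * v j) else 0)"

definition query_gate :: "(nat \<Rightarrow> bool) \<Rightarrow> qvec \<Rightarrow> qvec" where
  "query_gate g v = (\<lambda>(r, b, w). v (r, b \<noteq> g r, w))"

definition unitary_on :: "basis set \<Rightarrow> qop \<Rightarrow> bool" where
  "unitary_on S U \<longleftrightarrow>
     (\<forall>i\<in>S. \<forall>j\<in>S. (\<Sum>k\<in>S. cnj (U k i) * U k j) = (if i = j then 1 else 0))"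

definition valid_circuit :: "basis set \<Rightarrow> circuit \<Rightarrow> bool" where
  "valid_circuit S c \<longleftrightarrow>
     (\<forall>i. i \<notin> S \<longrightarrow> fst c i = 0) \<and> (\<Sum>i\<in>S. (cmod (fst c i))\<^sup>2) = 1 \<and>
     (\<forall>U\<in>set (snd c). unitary_on S U)"

fun final_state :: "basis set \<Rightarrow> (nat \<Rightarrow> bool) \<Rightarrow> qvec \<Rightarrow> qop list \<Rightarrow> qvec" where
  "final_state S g v [] = v"
| "final_state S g v (U # Us) = final_state S g (apply_op S U (query_gate g v)) Us"

definition queries :: "circuit \<Rightarrow> nat" where
  "queries c = length (snd c)"

definition outcome_prob :: "basis set \<Rightarrow> (nat \<Rightarrow> bool) \<Rightarrow> circuit \<Rightarrow> basis \<Rightarrow> real" where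
  "outcome_prob S g c out = (cmod (final_state S g (fst c) (snd c) out))\<^sup>2"

type_synonym strategy = "history \<Rightarrow> action pmf"

definition valid_strategy :: "basis set \<Rightarrow> strategy \<Rightarrow> bool" where
  "valid_strategy S \<sigma> \<longleftrightarrow> (\<forall>h c. pmf (\<sigma> h) (Run c) > 0 \<longrightarrow> valid_circuit S c)"

fun hist_prob :: "basis set \<Rightarrow> (nat \<Rightarrow> bool) \<Rightarrow> strategy \<Rightarrow> history \<Rightarrow> real" where
  "hist_prob S g \<sigma> [] = 1"
| "hist_prob S g \<sigma> ((c, out) # h) = hist_prob S g \<sigma> h * pmf (\<sigma> h) (Run c) * outcome_prob S g c out"

definition halt_prob :: "basis set \<Rightarrow> (nat \<Rightarrow> bool) \<Rightarrow> strategy \<Rightarrow> history \<Rightarrow> nat \<Rightarrow> real" where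
  "halt_prob S g \<sigma> h r = hist_prob S g \<sigma> h * pmf (\<sigma> h) (Halt r)"

definition hist_cost :: "history \<Rightarrow> nat" where
  "hist_cost h = sum_list (map (\<lambda>(c, out). queries c) h)"

text \<open>The algorithm halts with probability 1, and whenever it halts it outputs a seed r
  in R with g r (i.e. the found element is x0 = G(f,r) with f x0 = 1).\<close>
definition finds :: "nat set \<Rightarrow> basis set \<Rightarrow> (nat \<Rightarrow> bool) \<Rightarrow> strategy \<Rightarrow> bool" where
  "finds R S g \<sigma> \<longleftrightarrow>
     (\<integral>\<^sup>+ hr. ennreal (halt_prob S g \<sigma> (fst hr) (snd hr)) \<partial>count_space UNIV) = 1 \<and>
     (\<forall>h r. halt_prob S g \<sigma> h r > 0 \<longrightarrow> r \<in> R \<and> g r)"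

definition expected_queries :: "basis set \<Rightarrow> (nat \<Rightarrow> bool) \<Rightarrow> strategy \<Rightarrow> ennreal" where
  "expected_queries S g \<sigma> =
     (\<integral>\<^sup>+ hr. ennreal (halt_prob S g \<sigma> (fst hr) (snd hr) * real (hist_cost (fst hr))) \<partial>count_space UNIV)"

end

theory Submission
  imports Defs
begin

text \<open>The algorithm is the exponential search of Boyer, Brassard, Hoyer and Tapp run on the seed
  register. With t marked seeds among N and sin \<theta> = sqrt (t / N), j Grover iterations rotate the
  uniform superposition to the angle (2 j + 1) \<theta>, so a final check query finds a marked seed with
  probability sin ((2 j + 1) \<theta>) ^ 2. Averaged over a uniformly random j < M this is at least 1/4
  as soon as M sin \<theta> \<ge> 1. Letting M double every four rounds, the rounds before M reaches
  1 / sin \<theta> cost a geometric series dominated by O(1 / sin \<theta>), and afterwards each round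
  survives with probability at most 3/4 while its cost grows by less than 6/5; so the expected number
  of queries is O(sqrt (N / t)). Averaging over f and applying Jensen's inequality to the concave
  square root gives the bound O(sqrt T).\<close>

section \<open>Sums of squared sines of odd multiples\<close>

lemma sin_times_sum_cos_odd:
  fixes a :: real
  shows "2 * sin a * (\<Sum>j<M. cos ((2 * real j + 1) * a)) = sin (2 * real M * a)"
proof (induction M)
  case (Suc M)
  have "2 * sin a * cos ((2 * real M + 1) * a)
      = sin ((2 * real M + 1) * a + a) - sin ((2 * real M + 1) * a - a)"
    by (simp add: sin_add sin_diff)
  also have "\<dots> = sin (2 * real (Suc M) * a) - sin (2 * real M * a)"
    by (simp add: algebra_simps)
  finally show ?case
    using Suc by (simp add: distrib_left del: of_nat_Suc)
qed simp

lemma sum_sin_sq_odd_eq: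
  assumes "sin (2 * \<theta>) \<noteq> 0"
  shows "(\<Sum>j<M. (sin ((2 * real j + 1) * \<theta>))\<^sup>2)
           = real M / 2 - sin (4 * real M * \<theta>) / (4 * sin (2 * \<theta>))"
proof -
  have sin_sq: "(sin x)\<^sup>2 = (1 - cos (2 * x)) / 2" for x :: real
    by (simp add: cos_double_sin)
  have "(\<Sum>j<M. (sin ((2 * real j + 1) * \<theta>))\<^sup>2)
      = (\<Sum>j<M. (1 - cos ((2 * real j + 1) * (2 * \<theta>))) / 2)"
    by (intro sum.cong refl) (simp add: sin_sq algebra_simps)
  also have "\<dots> = real M / 2 - (\<Sum>j<M. cos ((2 * real j + 1) * (2 * \<theta>))) / 2"
    by (simp add: sum_divide_distrib[symmetric] sum_subtractf)
  also have "(\<Sum>j<M. cos ((2 * real j + 1) * (2 * \<theta>))) = sin (4 * real M * \<theta>) / (2 * sin (2 * \<theta>))"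
    using sin_times_sum_cos_odd[of "2 * \<theta>" M] assms by (simp add: field_simps)
  finally show ?thesis by simp
qed

lemma sum_sin_sq_odd_near_half:
  assumes "0 < sin (2 * \<theta>)" "1 \<le> real M * sin (2 * \<theta>)"
  shows "\<bar>(\<Sum>j<M. (sin ((2 * real j + 1) * \<theta>))\<^sup>2) - real M / 2\<bar> \<le> real M / 4"
proof -
  have "\<bar>sin (4 * real M * \<theta>) / (4 * sin (2 * \<theta>))\<bar> \<le> 1 / (4 * sin (2 * \<theta>))"
    using assms(1) by (simp add: abs_le_iff divide_right_mono)
  also have "\<dots> \<le> real M / 4"
    using assms by (simp add: field_simps)
  finally show ?thesis
    using assms(1) by (simp add: sum_sin_sq_odd_eq)
qed

lemma sum_sin_sq_odd_complement:
  "(\<Sum>j<M. (sin ((2 * real j + 1) * (pi / 2 - e)))\<^sup>2) = real M - (\<Sum>j<M. (sin ((2 * real j + 1) * e))\<^sup>2)"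
proof -
  have "(sin ((2 * real j + 1) * (pi / 2 - e)))\<^sup>2 = 1 - (sin ((2 * real j + 1) * e))\<^sup>2" for j
  proof -
    have "(2 * real j + 1) * (pi / 2 - e) = real j * pi + (pi / 2 - (2 * real j + 1) * e)"
      by (simp add: algebra_simps)
    moreover have "((-1::real) ^ j)\<^sup>2 = 1"
      by (simp flip: power_mult)
    ultimately have "(sin ((2 * real j + 1) * (pi / 2 - e)))\<^sup>2 = (cos ((2 * real j + 1) * e))\<^sup>2"
      by (simp add: sin_add sin_npi cos_npi power_mult_distrib sin_diff)
    then show ?thesis
      by (simp add: cos_squared_eq)
  qed
  then show ?thesis
    by (simp add: sum_subtractf)
qed

lemma sin_ge_two_thirds:
  fixes x :: real
  assumes "0 \<le> x" "x\<^sup>2 \<le> 2"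
  shows "2 * x / 3 \<le> sin x"
proof -
  have "\<bar>sin x - (\<Sum>m<3. sin_coeff m * x ^ m)\<bar> \<le> inverse (fact 3) * \<bar>x\<bar> ^ 3"
    by (rule Maclaurin_sin_bound)
  moreover have "(\<Sum>m<3. sin_coeff m * x ^ m) = x"
    by (simp add: sin_coeff_def numeral_3_eq_3 lessThan_Suc)
  ultimately have "\<bar>sin x - x\<bar> \<le> x * x\<^sup>2 / 6"
    using assms(1) by (simp add: fact_numeral power3_eq_cube power2_eq_square)
  moreover have "x * x\<^sup>2 \<le> x * 2"
    using assms by (intro mult_left_mono)
  ultimately show ?thesis
    by linarith
qed

lemma sum_sin_sq_odd_le_three_quarters:
  assumes "0 \<le> e" "e < pi / 6"
  shows "(\<Sum>j<M. (sin ((2 * real j + 1) * e))\<^sup>2) \<le> 3 * real M / 4"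
proof (cases "4 * real M * e \<le> pi")
  case True
  show ?thesis
  proof (cases "e = 0")
    case False
    then have "0 < sin (2 * e)"
      using assms by (intro sin_gt_zero) auto
    moreover have "0 \<le> sin (4 * real M * e)"
      using True assms by (intro sin_ge_zero) auto
    ultimately have "0 \<le> sin (4 * real M * e) / (4 * sin (2 * e))"
      by simp
    then show ?thesis
      using \<open>0 < sin (2 * e)\<close> by (simp add: sum_sin_sq_odd_eq)
  qed simp
next
  case False
  have "(2 * e)\<^sup>2 \<le> (4 / 3)\<^sup>2"
    using assms pi_less_4 by (intro power_mono) auto
  then have "2 * (2 * e) / 3 \<le> sin (2 * e)"
    using assms by (intro sin_ge_two_thirds) (auto simp: power2_eq_square)
  moreover have "3 < 4 * real M * e"
    using False pi_gt3 by linarith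
  moreover have "real M * (4 * e / 3) \<le> real M * sin (2 * e)"
    using \<open>2 * (2 * e) / 3 \<le> sin (2 * e)\<close> by (intro mult_left_mono) auto
  ultimately have "1 \<le> real M * sin (2 * e)"
    by linarith
  moreover have "0 < e"
    using \<open>3 < 4 * real M * e\<close> assms(1) by (cases "e = 0") auto
  then have "0 < sin (2 * e)"
    using \<open>2 * (2 * e) / 3 \<le> sin (2 * e)\<close> by linarith
  ultimately show ?thesis
    using sum_sin_sq_odd_near_half[of e M] by linarith
qed

text \<open>The estimate of Boyer, Brassard, Hoyer and Tapp: once M \<ge> 1 / sin \<theta>, a uniformly random number
  j < M of Grover iterations succeeds with probability at least 1/4.\<close>
lemma sum_sin_sq_odd_ge_quarter:
  assumes "0 < \<theta>" "\<theta> \<le> pi / 2" "1 \<le> real M * sin \<theta>"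
  shows "real M / 4 \<le> (\<Sum>j<M. (sin ((2 * real j + 1) * \<theta>))\<^sup>2)"
proof (cases "\<theta> \<le> pi / 3")
  case True
  have "1 / 2 \<le> cos \<theta>"
    using cos_monotone_0_pi_le[of \<theta> "pi / 3"] assms True by (simp add: cos_60)
  moreover have "0 < sin \<theta>"
    using assms by (intro sin_gt_zero) auto
  ultimately have "sin \<theta> \<le> sin (2 * \<theta>)"
    by (simp add: sin_double)
  then have "real M * sin \<theta> \<le> real M * sin (2 * \<theta>)"
    by (intro mult_left_mono) auto
  then show ?thesis
    using sum_sin_sq_odd_near_half[of \<theta> M] assms(3) \<open>0 < sin \<theta>\<close> \<open>sin \<theta> \<le> sin (2 * \<theta>)\<close> by linarith
next
  case False
  then have "(\<Sum>j<M. (sin ((2 * real j + 1) * (pi / 2 - \<theta>)))\<^sup>2) \<le> 3 * real M / 4"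
    using assms by (intro sum_sin_sq_odd_le_three_quarters) auto
  then show ?thesis
    using sum_sin_sq_odd_complement[of "pi / 2 - \<theta>" M] by simp
qed

section \<open>Weighted averages and restart products\<close>

lemma sum_weighted_sqrt_le_sqrt_sum:
  assumes P: "\<And>f. f \<in> F \<Longrightarrow> 0 \<le> P f" and x: "\<And>f. f \<in> F \<Longrightarrow> 0 \<le> x f"
    and P_sum: "(\<Sum>f\<in>F. P f) = 1"
  shows "(\<Sum>f\<in>F. P f * sqrt (x f)) \<le> sqrt (\<Sum>f\<in>F. P f * x f)"
proof (rule real_le_rsqrt)
  have "(\<Sum>f\<in>F. P f * sqrt (x f))\<^sup>2 = (\<Sum>f\<in>F. sqrt (P f) * (sqrt (P f) * sqrt (x f)))\<^sup>2"
    using P by (simp add: mult.assoc[symmetric])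
  also have "\<dots> \<le> (\<Sum>f\<in>F. (sqrt (P f))\<^sup>2) * (\<Sum>f\<in>F. (sqrt (P f) * sqrt (x f))\<^sup>2)"
    by (rule Cauchy_Schwarz_ineq_sum)
  also have "\<dots> = (\<Sum>f\<in>F. P f * x f)"
    using P x P_sum by (simp add: power_mult_distrib)
  finally show "(\<Sum>f\<in>F. P f * sqrt (x f))\<^sup>2 \<le> (\<Sum>f\<in>F. P f * x f)" .
qed

lemma prod_one_minus_telescope:
  fixes p :: "nat \<Rightarrow> 'a::comm_ring_1"
  shows "(\<Sum>k<n. (\<Prod>i<k. 1 - p i) * p k) = 1 - (\<Prod>k<n. 1 - p k)"
  by (induction n) (simp_all add: algebra_simps)

lemma prod_one_minus_le_power:
  fixes p :: "nat \<Rightarrow> real"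
  assumes "\<And>n. 0 \<le> p n" "\<And>n. p n \<le> 1" "\<And>n. n\<^sub>0 \<le> n \<Longrightarrow> q \<le> p n"
  shows "(\<Prod>k<n. 1 - p k) \<le> (1 - q) ^ (n - n\<^sub>0)"
proof (induction n)
  case (Suc n)
  have nonneg: "0 \<le> (\<Prod>k<n. 1 - p k)"
    using assms(2) by (intro prod_nonneg) (simp add: algebra_simps)
  show ?case
  proof (cases "n\<^sub>0 \<le> n")
    case True
    then have "(\<Prod>k<n. 1 - p k) * (1 - p n) \<le> (1 - q) ^ (n - n\<^sub>0) * (1 - q)"
      using Suc nonneg assms by (intro mult_mono) auto
    then show ?thesis
      using True by (simp add: Suc_diff_le mult.commute)
  next
    case False
    have "(\<Prod>k<n. 1 - p k) * (1 - p n) \<le> 1 * 1"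
      using nonneg prod_le_1[of "{..<n}" "\<lambda>k. 1 - p k"] assms(1,2) by (intro mult_mono) auto
    then show ?thesis
      using False by simp
  qed
qed simp

lemma prod_one_minus_LIMSEQ_zero:
  fixes p :: "nat \<Rightarrow> real"
  assumes p: "\<And>n. 0 \<le> p n" "\<And>n. p n \<le> 1" "\<And>n. n\<^sub>0 \<le> n \<Longrightarrow> q \<le> p n" and "0 < q"
  shows "(\<lambda>n. \<Prod>k<n. 1 - p k) \<longlonglongrightarrow> 0"
proof (rule Lim_null_comparison)
  show "\<forall>\<^sub>F n in sequentially. norm (\<Prod>k<n. 1 - p k) \<le> (1 - q) ^ (n - n\<^sub>0)"
    using prod_one_minus_le_power[OF p] p(2) by (simp add: prod_nonneg algebra_simps)
  have "q \<le> 1"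
    using p(2,3)[of n\<^sub>0] by simp
  then show "(\<lambda>n. (1 - q) ^ (n - n\<^sub>0)) \<longlonglongrightarrow> 0"
    using \<open>0 < q\<close> by (intro filterlim_compose[OF LIMSEQ_power_zero filterlim_minus_const_nat_at_top]) auto
qed

lemma sum_pow_div_4:
  "(\<Sum>n<4 * m. (2::real) ^ (n div 4)) = 4 * (2 ^ m - 1)"
proof -
  have "(\<Sum>n<m * 4. (2::real) ^ (n div 4)) = (\<Sum>k<m. \<Sum>n\<in>{k * 4..<k * 4 + 4}. 2 ^ (n div 4))"
    by (rule sum.nat_group[symmetric])
  also have "\<dots> = (\<Sum>k<m. 4 * 2 ^ k)"
  proof (intro sum.cong refl)
    fix k
    have "n div 4 = k" if "n \<in> {k * 4..<k * 4 + 4}" for n :: nat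
      using that by (auto intro: div_nat_eqI)
    then show "(\<Sum>n\<in>{k * 4..<k * 4 + 4}. (2::real) ^ (n div 4)) = 4 * 2 ^ k"
      by simp
  qed
  also have "\<dots> = 4 * (2 ^ m - 1)"
    by (simp add: sum_distrib_left[symmetric] sum_gp_strict)
  finally show ?thesis
    by (simp add: mult.commute)
qed

lemma pow_div_4_le: "(2::real) ^ (i div 4) \<le> (6 / 5) ^ i"
proof -
  have "(2::real) ^ (i div 4) \<le> ((6 / 5) ^ 4) ^ (i div 4)"
    by (intro power_mono) (auto simp: power_divide)
  also have "\<dots> = (6 / 5) ^ (4 * (i div 4))"
    by (simp add: power_mult)
  also have "\<dots> \<le> (6 / 5) ^ i"
    by (intro power_increasing) auto
  finally show ?thesis .
qed

text \<open>Before round 4 s the costs grow geometrically, so their sum is dominated by the last one;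
  afterwards the survival probability shrinks by 3/4 per round while the cost grows by at most
  2 ^ (1/4) < 6/5 per round.\<close>
lemma restart_cost_le:
  fixes p c :: "nat \<Rightarrow> real"
  assumes p: "\<And>n. 0 \<le> p n" "\<And>n. p n \<le> 1" "\<And>n. 4 * s \<le> n \<Longrightarrow> 1 / 4 \<le> p n"
    and c: "\<And>n. 0 \<le> c n" "\<And>n. c n \<le> 2 * 2 ^ (n div 4)"
  shows "(\<Sum>n<N. (\<Prod>k<n. 1 - p k) * c n) \<le> 28 * 2 ^ s"
proof -
  define a where "a n = (\<Prod>k<n. 1 - p k)" for n
  have a: "0 \<le> a n" "a n \<le> 1" for n
    using p(1,2) by (auto simp: a_def intro!: prod_nonneg prod_le_1)
  have decay: "a (4 * s + i) \<le> (3 / 4) ^ i" for i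
    using prod_one_minus_le_power[of p "4 * s" "1 / 4" "4 * s + i"] p by (simp add: a_def)
  have "(\<Sum>n<N. a n * c n) \<le> (\<Sum>n<4 * s + N. a n * c n)"
    using a c by (intro sum_mono2) auto
  also have "\<dots> = (\<Sum>n<4 * s. a n * c n) + (\<Sum>i<N. a (4 * s + i) * c (4 * s + i))"
    using sum.atLeastLessThan_concat[of 0 "4 * s" "4 * s + N" "\<lambda>n. a n * c n"]
      sum.shift_bounds_nat_ivl[of "\<lambda>n. a n * c n" 0 "4 * s" N]
    by (simp add: atLeast0LessThan add.commute)
  also have "(\<Sum>n<4 * s. a n * c n) \<le> (\<Sum>n<4 * s. 2 * 2 ^ (n div 4))"
    using order_trans[OF mult_left_le_one_le[OF c(1) a] c(2)] by (intro sum_mono)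
  also have "\<dots> \<le> 8 * 2 ^ s"
    by (simp add: sum_distrib_left[symmetric] sum_pow_div_4)
  also have "(\<Sum>i<N. a (4 * s + i) * c (4 * s + i)) \<le> (\<Sum>i<N. (3 / 4) ^ i * (2 * 2 ^ s * (6 / 5) ^ i))"
  proof (intro sum_mono mult_mono)
    fix i
    have "c (4 * s + i) \<le> 2 * 2 ^ (s + i div 4)"
      using c(2)[of "4 * s + i"] by simp
    also have "\<dots> \<le> 2 * 2 ^ s * (6 / 5) ^ i"
      using pow_div_4_le[of i] by (simp add: power_add)
    finally show "c (4 * s + i) \<le> 2 * 2 ^ s * (6 / 5) ^ i" .
  qed (use decay c(1) in auto)
  also have "\<dots> = 2 * 2 ^ s * (\<Sum>i<N. (9 / 10) ^ i)"
    by (simp add: sum_distrib_left power_mult_distrib[symmetric] algebra_simps)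
  also have "(\<Sum>i<N. (9 / 10 :: real) ^ i) \<le> 10"
    by (simp add: sum_gp_strict)
  finally show ?thesis
    by (simp add: a_def)
qed

lemma exists_power_of_two_scaling:
  fixes x :: real
  assumes "0 < x" "x \<le> 1"
  shows "\<exists>s. 1 \<le> 2 ^ s * x \<and> 2 ^ s * x < 2"
proof -
  obtain s' where "1 / x < 2 ^ s'"
    using real_arch_pow[of 2 "1 / x"] by auto
  then have ex: "\<exists>s. 1 \<le> 2 ^ s * x"
    using assms by (auto simp: field_simps intro: less_imp_le)
  define s where "s = (LEAST s. 1 \<le> 2 ^ s * x)"
  have "1 \<le> 2 ^ s * x"
    unfolding s_def by (rule LeastI_ex[OF ex])
  moreover have "2 ^ s * x < 2"
  proof (cases s)
    case 0
    then show ?thesis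
      using assms by simp
  next
    case (Suc s')
    then have "\<not> 1 \<le> 2 ^ s' * x"
      using not_less_Least[of s' "\<lambda>s. 1 \<le> 2 ^ s * x"] by (simp add: s_def)
    then show ?thesis
      using Suc by simp
  qed
  ultimately show ?thesis
    by blast
qed

section \<open>Grover iterations\<close>

text \<open>All amplitudes of the algorithm are real: states and gates are computed as real-valued
  functions and embedded into the complex model.\<close>

definition real_vec :: "(basis \<Rightarrow> real) \<Rightarrow> qvec" where
  "real_vec v i = complex_of_real (v i)"

definition real_op :: "(basis \<Rightarrow> basis \<Rightarrow> real) \<Rightarrow> qop" where
  "real_op U i j = complex_of_real (U i j)"

definition apply_real_op :: "basis set \<Rightarrow> (basis \<Rightarrow> basis \<Rightarrow> real) \<Rightarrow> (basis \<Rightarrow> real) \<Rightarrow> basis \<Rightarrow> real" where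
  "apply_real_op S U v = (\<lambda>i. if i \<in> S then (\<Sum>j\<in>S. U i j * v j) else 0)"

definition real_query :: "(nat \<Rightarrow> bool) \<Rightarrow> (basis \<Rightarrow> real) \<Rightarrow> basis \<Rightarrow> real" where
  "real_query g v = (\<lambda>(r, b, w). v (r, b \<noteq> g r, w))"

definition identity_op :: "basis \<Rightarrow> basis \<Rightarrow> real" where
  "identity_op i j = of_bool (i = j)"

lemma apply_op_real_op: "apply_op S (real_op U) (real_vec v) = real_vec (apply_real_op S U v)"
  by (auto simp: apply_op_def real_op_def real_vec_def apply_real_op_def fun_eq_iff)

lemma query_gate_real_vec: "query_gate g (real_vec v) = real_vec (real_query g v)"
  by (auto simp: query_gate_def real_query_def real_vec_def fun_eq_iff)

lemma unitary_on_real_op: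
  assumes "\<And>i j. i \<in> S \<Longrightarrow> j \<in> S \<Longrightarrow> (\<Sum>k\<in>S. U k i * U k j) = of_bool (i = j)"
  shows "unitary_on S (real_op U)"
  using assms by (simp add: unitary_on_def real_op_def flip: of_real_mult of_real_sum)

lemma apply_identity_op:
  assumes "finite S" "\<And>i. i \<notin> S \<Longrightarrow> v i = 0"
  shows "apply_real_op S identity_op v = v"
  using assms by (auto simp: apply_real_op_def identity_op_def fun_eq_iff)

lemma final_state_append:
  "final_state S g v (xs @ ys) = final_state S g (final_state S g v xs) ys"
  by (induction xs arbitrary: v) auto

lemma finite_qcarrier: "finite R \<Longrightarrow> finite (qcarrier R m)"
  by (simp add: qcarrier_def)

lemma mem_qcarrier_Suc_0 [simp]: "(r, b, w) \<in> qcarrier R (Suc 0) \<longleftrightarrow> r \<in> R \<and> w = 0"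
  by (auto simp: qcarrier_def)

lemma sum_qcarrier_Suc_0:
  assumes "finite R"
  shows "(\<Sum>i\<in>qcarrier R (Suc 0). f i) = (\<Sum>r\<in>R. f (r, False, 0) + f (r, True, 0))"
proof -
  have "qcarrier R (Suc 0) = (\<lambda>(r, b). (r, b, 0)) ` (R \<times> UNIV)"
    by (auto simp: qcarrier_def image_iff)
  moreover have "inj_on (\<lambda>(r, b). (r, b, 0::nat)) (R \<times> (UNIV :: bool set))"
    by (auto simp: inj_on_def)
  ultimately have "(\<Sum>i\<in>qcarrier R (Suc 0). f i) = (\<Sum>(r, b)\<in>R \<times> UNIV. f (r, b, 0))"
    by (simp add: sum.reindex case_prod_beta')
  also have "\<dots> = (\<Sum>r\<in>R. f (r, False, 0) + f (r, True, 0))"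
    by (simp add: sum.cartesian_product[symmetric] UNIV_bool add.commute)
  finally show ?thesis .
qed

text \<open>The amplitude of the basis vector b in the bit state (|0> - |1>) / sqrt 2.\<close>
definition minus_amp :: "bool \<Rightarrow> real" where
  "minus_amp b = (if b then -1 else 1) / sqrt 2"

lemma minus_amp_orthonormal: "minus_amp False * minus_amp False + minus_amp b * minus_amp b' = of_bool (b = b')"
  by (cases b; cases b') (simp_all add: minus_amp_def)

lemma sin_add_double_eq:
  fixes \<phi> \<theta> :: real
  shows "sin (\<phi> + 2 * \<theta>) = sin \<phi> + 2 * sin \<theta> * cos (\<phi> + \<theta>)"
  using sin_add[of "\<phi> + \<theta>" \<theta>] sin_diff[of "\<phi> + \<theta>" \<theta>] by (simp add: algebra_simps)

lemma cos_add_double_eq: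
  fixes \<phi> \<theta> :: real
  shows "cos (\<phi> + 2 * \<theta>) = 2 * cos \<theta> * cos (\<phi> + \<theta>) - cos \<phi>"
  using cos_add[of "\<phi> + \<theta>" \<theta>] cos_diff[of "\<phi> + \<theta>" \<theta>] by (simp add: algebra_simps)

lemma cos_odd_mult_half_pi: "cos ((2 * real j + 1) * pi / 2) = 0"
proof -
  have "(2 * real j + 1) * pi / 2 = real j * pi + pi / 2"
    by (simp add: algebra_simps)
  then show ?thesis
    by (simp only: cos_add sin_npi) simp
qed

locale grover_space =
  fixes R :: "nat set"
  assumes finite_R: "finite R" and R_nonempty: "R \<noteq> {}"
begin

abbreviation reg :: "basis set" where
  "reg \<equiv> qcarrier R (Suc 0)"

lemma card_R_pos: "0 < card R"
  using finite_R R_nonempty by (simp add: card_gt_0_iff)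

definition uniform_state :: "basis \<Rightarrow> real" where
  "uniform_state = (\<lambda>(r, b, w). if r \<in> R \<and> w = 0 then minus_amp b / sqrt (card R) else 0)"

definition diffusion :: "basis \<Rightarrow> basis \<Rightarrow> real" where
  "diffusion = (\<lambda>(r, b, w) (r', b', w'). if b = b' \<and> w = w' then 2 / card R - of_bool (r = r') else 0)"

definition hadamard_bit :: "basis \<Rightarrow> basis \<Rightarrow> real" where
  "hadamard_bit = (\<lambda>(r, b, w) (r', b', w'). if r = r' \<and> w = w' then minus_amp (b \<and> b') else 0)"

text \<open>j Grover iterations followed by a check: the Hadamard gate turns the phase-kickback bit
  (|0> - |1>) / sqrt 2 into |1>, and the last query then records in it whether the seed is unmarked.
  Every query is followed by one unitary, hence the trailing identity.\<close>
definition grover_circuit :: "nat \<Rightarrow> circuit" where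
  "grover_circuit j = (real_vec uniform_state,
     replicate j (real_op diffusion) @ [real_op hadamard_bit, real_op identity_op])"

lemma queries_grover_circuit: "queries (grover_circuit j) = j + 2"
  by (simp add: queries_def grover_circuit_def)

lemma inj_grover_circuit: "inj grover_circuit"
  by (rule injI) (simp add: grover_circuit_def)

lemma unitary_diffusion: "unitary_on reg (real_op diffusion)"
proof (rule unitary_on_real_op)
  fix i j assume "i \<in> reg" "j \<in> reg"
  then obtain r1 b1 r2 b2 where ij: "i = (r1, b1, 0)" "j = (r2, b2, 0)" "r1 \<in> R" "r2 \<in> R"
    by (cases i; cases j) auto
  define N where "N = real (card R)"
  have N: "0 < N"
    using card_R_pos by (simp add: N_def)
  have "(\<Sum>r\<in>R. (2 / N - of_bool (r = r1)) * (2 / N - of_bool (r = r2)))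
      = (\<Sum>r\<in>R. 4 / N\<^sup>2 - (if r = r1 then 2 / N else 0) - (if r = r2 then 2 / N else 0)
                 + (if r = r1 then of_bool (r1 = r2) else 0))"
    using N by (intro sum.cong refl) (auto simp: power2_eq_square field_simps)
  also have "\<dots> = N * (4 / N\<^sup>2) - 2 * (2 / N) + of_bool (r1 = r2)"
    using ij finite_R by (simp add: sum.distrib sum_subtractf sum.delta' N_def)
  also have "\<dots> = of_bool (r1 = r2)"
    using N by (simp add: power2_eq_square)
  finally have "(\<Sum>r\<in>R. (2 / N - of_bool (r = r1)) * (2 / N - of_bool (r = r2))) = of_bool (r1 = r2)" .
  then show "(\<Sum>k\<in>reg. diffusion k i * diffusion k j) = of_bool (i = j)"
    by (cases b1; cases b2) (simp_all add: sum_qcarrier_Suc_0[OF finite_R] ij diffusion_def N_def)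
qed

lemma unitary_hadamard_bit: "unitary_on reg (real_op hadamard_bit)"
proof (rule unitary_on_real_op)
  fix i j assume "i \<in> reg" "j \<in> reg"
  then obtain r1 b1 r2 b2 where ij: "i = (r1, b1, 0)" "j = (r2, b2, 0)" "r1 \<in> R" "r2 \<in> R"
    by (cases i; cases j) auto
  have eq: "(\<lambda>r. hadamard_bit (r, False, 0) i * hadamard_bit (r, False, 0) j + hadamard_bit (r, True, 0) i * hadamard_bit (r, True, 0) j)
     = (\<lambda>r. if r = r1 then of_bool (i = j) else 0)"
    using minus_amp_orthonormal[of b1 b2] by (auto simp: fun_eq_iff hadamard_bit_def ij)
  show "(\<Sum>k\<in>reg. hadamard_bit k i * hadamard_bit k j) = of_bool (i = j)"
    unfolding sum_qcarrier_Suc_0[OF finite_R] eq using ij finite_R by (simp add: sum.delta')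
qed

lemma unitary_identity_op: "unitary_on reg (real_op identity_op)"
proof (rule unitary_on_real_op)
  fix i j assume "i \<in> reg"
  have eq: "(\<lambda>k. identity_op k i * identity_op k j) = (\<lambda>k. if k = i then of_bool (i = j) else 0)"
    by (auto simp: identity_op_def fun_eq_iff)
  show "(\<Sum>k\<in>reg. identity_op k i * identity_op k j) = of_bool (i = j)"
    unfolding eq using \<open>i \<in> reg\<close> finite_qcarrier[OF finite_R] by (simp add: sum.delta)
qed

lemma valid_grover_circuit: "valid_circuit reg (grover_circuit j)"
  unfolding valid_circuit_def
proof (intro conjI)
  show "\<forall>i. i \<notin> reg \<longrightarrow> fst (grover_circuit j) i = 0"
    by (auto simp: grover_circuit_def real_vec_def uniform_state_def qcarrier_def)
  have "(\<Sum>i\<in>reg. (cmod (fst (grover_circuit j) i))\<^sup>2) = (\<Sum>r\<in>R. 1 / real (card R))"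
    unfolding sum_qcarrier_Suc_0[OF finite_R]
    by (intro sum.cong refl) (simp only: grover_circuit_def fst_conv real_vec_def norm_of_real power2_abs,
        simp add: uniform_state_def minus_amp_def power_divide power_mult_distrib)
  then show "(\<Sum>i\<in>reg. (cmod (fst (grover_circuit j) i))\<^sup>2) = 1"
    using card_R_pos by simp
  show "\<forall>U\<in>set (snd (grover_circuit j)). unitary_on reg U"
    using unitary_diffusion unitary_hadamard_bit unitary_identity_op by (auto simp: grover_circuit_def)
qed

lemma card_marked_add_unmarked: "card {r\<in>R. g r} + card {r\<in>R. \<not> g r} = card R"
proof -
  have "card ({r\<in>R. g r} \<union> {r\<in>R. \<not> g r}) = card {r\<in>R. g r} + card {r\<in>R. \<not> g r}"
    using finite_R by (intro card_Un_disjoint) auto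
  moreover have "{r\<in>R. g r} \<union> {r\<in>R. \<not> g r} = R"
    by auto
  ultimately show ?thesis
    by simp
qed

definition marked_state :: "(nat \<Rightarrow> bool) \<Rightarrow> real \<Rightarrow> real \<Rightarrow> basis \<Rightarrow> real" where
  "marked_state g a b = (\<lambda>(r, c, w). if r \<in> R \<and> w = 0 then minus_amp c * (if g r then a else b) else 0)"

lemma marked_state_cong:
  assumes "card {r\<in>R. g r} > 0 \<Longrightarrow> a = a'" "card {r\<in>R. \<not> g r} > 0 \<Longrightarrow> b = b'"
  shows "marked_state g a b = marked_state g a' b'"
proof -
  have amp: "(if g r then a else b) = (if g r then a' else b')" if "r \<in> R" for r
    using assms that finite_R by (auto simp: card_gt_0_iff)
  show ?thesis
    unfolding marked_state_def
  proof (intro ext, clarify)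
    fix r c w
    show "(if r \<in> R \<and> w = 0 then minus_amp c * (if g r then a else b) else 0)
        = (if r \<in> R \<and> w = 0 then minus_amp c * (if g r then a' else b') else 0)"
      using amp[of r] by auto
  qed
qed

lemma real_query_marked_state: "real_query g (marked_state g a b) = marked_state g (- a) b"
  by (auto simp: fun_eq_iff real_query_def marked_state_def minus_amp_def)

lemma diffusion_marked_state:
  assumes m: "m = (real (card {r\<in>R. g r}) * a + real (card {r\<in>R. \<not> g r}) * b) / card R"
  shows "apply_real_op reg diffusion (marked_state g a b) = marked_state g (2 * m - a) (2 * m - b)"
proof (rule ext)
  fix i :: basis
  obtain r c w where i: "i = (r, c, w)"
    by (cases i)
  define amp where "amp r' = (if g r' then a else b)" for r'
  define N where "N = real (card R)"
  have "(\<Sum>r'\<in>R. amp r') = m * N"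
    using m card_R_pos finite_R by (simp add: amp_def N_def sum.If_cases Int_def)
  moreover have "(\<Sum>r'\<in>R. minus_amp c * (2 / N * amp r')) = minus_amp c * (2 / N) * (\<Sum>r'\<in>R. amp r')"
    by (simp add: sum_distrib_left mult.assoc)
  ultimately have "(\<Sum>r'\<in>R. minus_amp c * (2 / N * amp r')) = minus_amp c * 2 * m"
    using card_R_pos by (simp add: N_def)
  moreover have "(\<Sum>k\<in>reg. diffusion i k * marked_state g a b k)
      = (\<Sum>r'\<in>R. minus_amp c * (2 / N * amp r') - (if r' = r then minus_amp c * amp r else 0))"
    if "r \<in> R" "w = 0"
    unfolding sum_qcarrier_Suc_0[OF finite_R]
    by (intro sum.cong refl) (cases c; auto simp: i that diffusion_def marked_state_def amp_def N_def algebra_simps)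
  ultimately show "apply_real_op reg diffusion (marked_state g a b) i = marked_state g (2 * m - a) (2 * m - b) i"
    using finite_R
    by (auto simp: i apply_real_op_def marked_state_def sum_subtractf sum.delta' amp_def algebra_simps)
qed

lemma hadamard_marked_state:
  "apply_real_op reg hadamard_bit (marked_state g a b)
     = (\<lambda>(r, c, w). if r \<in> R \<and> w = 0 \<and> c then (if g r then a else b) else 0)"
proof (rule ext)
  fix i :: basis
  obtain r c w where i: "i = (r, c, w)"
    by (cases i)
  have "(\<Sum>k\<in>reg. hadamard_bit i k * marked_state g a b k)
      = (\<Sum>r'\<in>R. if r' = r then (if c then (if g r then a else b) else 0) else 0)" if "r \<in> R" "w = 0"
    unfolding sum_qcarrier_Suc_0[OF finite_R]
    by (intro sum.cong refl) (cases c; auto simp: i that hadamard_bit_def marked_state_def minus_amp_def)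
  then show "apply_real_op reg hadamard_bit (marked_state g a b) i
      = (\<lambda>(r, c, w). if r \<in> R \<and> w = 0 \<and> c then (if g r then a else b) else 0) i"
    using finite_R by (auto simp: i apply_real_op_def sum.delta')
qed

lemma sqrt_marked_fraction_bounds:
  "0 \<le> sqrt (card {r\<in>R. g r} / card R)" "sqrt (card {r\<in>R. g r} / card R) \<le> 1"
proof -
  have "card {r\<in>R. g r} \<le> card R"
    using finite_R by (intro card_mono) auto
  then show "0 \<le> sqrt (card {r\<in>R. g r} / card R)" "sqrt (card {r\<in>R. g r} / card R) \<le> 1"
    using card_R_pos by (simp_all add: divide_le_eq_1)
qed

definition grover_angle :: "(nat \<Rightarrow> bool) \<Rightarrow> real" where
  "grover_angle g = arcsin (sqrt (card {r\<in>R. g r} / card R))"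

lemma grover_angle_bounds: "0 \<le> grover_angle g" "grover_angle g \<le> pi / 2"
proof -
  show "0 \<le> grover_angle g"
    unfolding grover_angle_def using sqrt_marked_fraction_bounds[of g] by (intro arcsin_nonneg) auto
  show "grover_angle g \<le> pi / 2"
    unfolding grover_angle_def using sqrt_marked_fraction_bounds[of g] by (intro arcsin_ubound) linarith+
qed

lemma sin_grover_angle: "sin (grover_angle g) = sqrt (card {r\<in>R. g r}) / sqrt (card R)"
proof -
  have "sin (grover_angle g) = sqrt (card {r\<in>R. g r} / card R)"
    unfolding grover_angle_def using sqrt_marked_fraction_bounds[of g] by (intro sin_arcsin) linarith+
  then show ?thesis
    by (simp add: real_sqrt_divide)
qed

lemma cos_grover_angle: "cos (grover_angle g) = sqrt (card {r\<in>R. \<not> g r}) / sqrt (card R)"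
proof -
  have "cos (grover_angle g) = sqrt (1 - (sqrt (card {r\<in>R. g r} / card R))\<^sup>2)"
    unfolding grover_angle_def using sqrt_marked_fraction_bounds[of g] by (intro cos_arcsin) linarith+
  also have "\<dots> = sqrt (card {r\<in>R. \<not> g r} / card R)"
    using card_marked_add_unmarked[of g] card_R_pos by (simp add: field_simps flip: of_nat_add)
  finally show ?thesis
    by (simp add: real_sqrt_divide)
qed

text \<open>The point at angle \<phi> of the circle through the normalised unmarked (\<phi> = 0) and marked
  (\<phi> = pi / 2) superpositions.\<close>
definition grover_state :: "(nat \<Rightarrow> bool) \<Rightarrow> real \<Rightarrow> basis \<Rightarrow> real" where
  "grover_state g \<phi> = marked_state g (sin \<phi> / sqrt (card {r\<in>R. g r})) (cos \<phi> / sqrt (card {r\<in>R. \<not> g r}))"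

lemma uniform_state_eq_grover_state: "uniform_state = grover_state g (grover_angle g)"
proof -
  have "uniform_state = marked_state g (1 / sqrt (card R)) (1 / sqrt (card R))"
    by (auto simp: fun_eq_iff uniform_state_def marked_state_def)
  also have "\<dots> = grover_state g (grover_angle g)"
    unfolding grover_state_def
    by (rule marked_state_cong) (simp_all add: sin_grover_angle cos_grover_angle)
  finally show ?thesis .
qed

lemma grover_angle_no_marked: "card {r\<in>R. g r} = 0 \<Longrightarrow> grover_angle g = 0"
  by (simp add: grover_angle_def)

lemma grover_angle_no_unmarked: "card {r\<in>R. \<not> g r} = 0 \<Longrightarrow> grover_angle g = pi / 2"
  using card_marked_add_unmarked[of g] card_R_pos by (simp add: grover_angle_def)

lemma grover_iteration:
  "apply_real_op reg diffusion (real_query g (grover_state g \<phi>)) = grover_state g (\<phi> + 2 * grover_angle g)"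
proof -
  define \<theta> where "\<theta> = grover_angle g"
  define t where "t = real (card {r\<in>R. g r})"
  define u where "u = real (card {r\<in>R. \<not> g r})"
  define K where "K = sqrt (card R)"
  have K: "0 < K" "K\<^sup>2 = card R"
    using card_R_pos by (simp_all add: K_def)
  have st: "sqrt t = K * sin \<theta>" and cu: "sqrt u = K * cos \<theta>"
    using card_R_pos by (simp_all add: \<theta>_def t_def u_def K_def sin_grover_angle cos_grover_angle)
  \<comment> \<open>the mean amplitude after the query, about which the diffusion reflects\<close>
  define m where "m = (t * - (sin \<phi> / sqrt t) + u * (cos \<phi> / sqrt u)) / card R"
  have "m = (- sqrt t * sin \<phi> + sqrt u * cos \<phi>) / K\<^sup>2"
    by (simp add: m_def K t_def u_def real_div_sqrt flip: times_divide_eq_left)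
  also have "\<dots> = cos (\<phi> + \<theta>) / K"
    using K(1) by (simp add: st cu cos_add power2_eq_square field_simps)
  finally have m_eq: "m = cos (\<phi> + \<theta>) / K" .
  have "apply_real_op reg diffusion (real_query g (grover_state g \<phi>))
      = marked_state g (2 * m + sin \<phi> / sqrt t) (2 * m - cos \<phi> / sqrt u)"
    unfolding grover_state_def real_query_marked_state
    by (subst diffusion_marked_state[OF m_def[unfolded t_def u_def]]) (simp add: t_def u_def)
  also have "\<dots> = grover_state g (\<phi> + 2 * \<theta>)"
    unfolding grover_state_def
  proof (rule marked_state_cong)
    assume "card {r\<in>R. g r} > 0"
    then have "sin \<theta> \<noteq> 0"
      using st K by (auto simp: t_def)
    then show "2 * m + sin \<phi> / sqrt t = sin (\<phi> + 2 * \<theta>) / sqrt (card {r\<in>R. g r})"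
      using K by (simp add: m_eq st sin_add_double_eq flip: t_def) (simp add: field_simps)
  next
    assume "card {r\<in>R. \<not> g r} > 0"
    then have "cos \<theta> \<noteq> 0"
      using cu K by (auto simp: u_def)
    then show "2 * m - cos \<phi> / sqrt u = cos (\<phi> + 2 * \<theta>) / sqrt (card {r\<in>R. \<not> g r})"
      using K by (simp add: m_eq cu cos_add_double_eq flip: u_def) (simp add: field_simps)
  qed
  finally show ?thesis
    by (simp add: \<theta>_def)
qed

lemma final_state_grover_iterations:
  "final_state reg g (real_vec (grover_state g \<phi>)) (replicate j (real_op diffusion))
     = real_vec (grover_state g (\<phi> + 2 * real j * grover_angle g))"
proof (induction j arbitrary: \<phi>)
  case (Suc j)
  show ?case
    using Suc[of "\<phi> + 2 * grover_angle g"]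
    by (simp add: query_gate_real_vec apply_op_real_op grover_iteration algebra_simps)
qed simp

lemma outcome_prob_grover_circuit:
  "outcome_prob reg g (grover_circuit j) (r, c, w)
     = (if r \<in> R \<and> w = 0 \<and> c \<noteq> g r
        then (if g r then (sin ((2 * real j + 1) * grover_angle g))\<^sup>2 / card {r\<in>R. g r}
              else (cos ((2 * real j + 1) * grover_angle g))\<^sup>2 / card {r\<in>R. \<not> g r})
        else 0)"
proof -
  define \<phi> where "\<phi> = (2 * real j + 1) * grover_angle g"
  define a where "a = sin \<phi> / sqrt (card {r\<in>R. g r})"
  define b where "b = cos \<phi> / sqrt (card {r\<in>R. \<not> g r})"
  have "final_state reg g (real_vec (grover_state g (grover_angle g))) (replicate j (real_op diffusion))
      = real_vec (marked_state g a b)"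
    unfolding final_state_grover_iterations
    unfolding grover_state_def a_def b_def \<phi>_def by (simp add: algebra_simps)
  then have "final_state reg g (fst (grover_circuit j)) (snd (grover_circuit j))
      = real_vec (apply_real_op reg identity_op
          (real_query g (apply_real_op reg hadamard_bit (marked_state g (- a) b))))"
    unfolding grover_circuit_def uniform_state_eq_grover_state[of g]
    by (simp add: final_state_append query_gate_real_vec apply_op_real_op real_query_marked_state)
  also have "apply_real_op reg identity_op (real_query g (apply_real_op reg hadamard_bit (marked_state g (- a) b)))
      = real_query g (apply_real_op reg hadamard_bit (marked_state g (- a) b))"
    by (rule apply_identity_op)
      (auto simp: finite_qcarrier[OF finite_R] real_query_def hadamard_marked_state split: prod.splits)
  finally show ?thesis
    by (simp add: outcome_prob_def real_vec_def hadamard_marked_state real_query_def a_def b_def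
        power_divide \<phi>_def)
qed

lemma card_marked_mult_sin_sq:
  "card {r\<in>R. g r} * ((sin ((2 * real j + 1) * grover_angle g))\<^sup>2 / card {r\<in>R. g r})
     = (sin ((2 * real j + 1) * grover_angle g))\<^sup>2"
  by (cases "card {r\<in>R. g r} = 0") (simp_all add: grover_angle_no_marked)

lemma card_unmarked_mult_cos_sq:
  "card {r\<in>R. \<not> g r} * ((cos ((2 * real j + 1) * grover_angle g))\<^sup>2 / card {r\<in>R. \<not> g r})
     = (cos ((2 * real j + 1) * grover_angle g))\<^sup>2"
  by (cases "card {r\<in>R. \<not> g r} = 0") (simp_all add: grover_angle_no_unmarked cos_odd_mult_half_pi)

lemma marked_mass_grover_circuit:
  "(\<Sum>out\<in>reg. outcome_prob reg g (grover_circuit j) out * of_bool (\<not> fst (snd out)))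
     = (sin ((2 * real j + 1) * grover_angle g))\<^sup>2"
proof -
  have "(\<Sum>out\<in>reg. outcome_prob reg g (grover_circuit j) out * of_bool (\<not> fst (snd out)))
      = (\<Sum>r\<in>R. if g r then (sin ((2 * real j + 1) * grover_angle g))\<^sup>2 / card {r\<in>R. g r} else 0)"
    unfolding sum_qcarrier_Suc_0[OF finite_R]
    by (intro sum.cong refl) (simp add: outcome_prob_grover_circuit)
  also have "\<dots> = card {r\<in>R. g r} * ((sin ((2 * real j + 1) * grover_angle g))\<^sup>2 / card {r\<in>R. g r})"
    using finite_R by (simp add: sum.If_cases Int_def)
  finally show ?thesis
    by (simp only: card_marked_mult_sin_sq)
qed

lemma total_mass_grover_circuit: "(\<Sum>out\<in>reg. outcome_prob reg g (grover_circuit j) out) = 1"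
proof -
  have "(\<Sum>out\<in>reg. outcome_prob reg g (grover_circuit j) out)
      = (\<Sum>r\<in>R. if g r then (sin ((2 * real j + 1) * grover_angle g))\<^sup>2 / card {r\<in>R. g r}
                 else (cos ((2 * real j + 1) * grover_angle g))\<^sup>2 / card {r\<in>R. \<not> g r})"
    unfolding sum_qcarrier_Suc_0[OF finite_R]
    by (intro sum.cong refl) (simp add: outcome_prob_grover_circuit)
  also have "\<dots> = card {r\<in>R. g r} * ((sin ((2 * real j + 1) * grover_angle g))\<^sup>2 / card {r\<in>R. g r})
      + card {r\<in>R. \<not> g r} * ((cos ((2 * real j + 1) * grover_angle g))\<^sup>2 / card {r\<in>R. \<not> g r})"
    using finite_R by (simp add: sum.If_cases Int_def)
  finally show ?thesis
    by (simp only: card_marked_mult_sin_sq card_unmarked_mult_cos_sq sin_cos_squared_add)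
qed

end

section \<open>Exponential search\<close>

lemma nn_integral_list_Nil_Cons:
  fixes \<Psi> :: "'a list \<Rightarrow> ennreal"
  shows "(\<integral>\<^sup>+ h. \<Psi> h \<partial>count_space UNIV)
       = \<Psi> [] + (\<integral>\<^sup>+ h. \<integral>\<^sup>+ x. \<Psi> (x # h) \<partial>count_space UNIV \<partial>count_space UNIV)"
proof -
  have "(\<integral>\<^sup>+ h. \<Psi> h \<partial>count_space UNIV)
      = (\<integral>\<^sup>+ h. \<Psi> h * indicator {[]} h \<partial>count_space UNIV) + (\<integral>\<^sup>+ h. \<Psi> h * indicator {h. h \<noteq> []} h \<partial>count_space UNIV)"
    by (subst nn_integral_add[symmetric]) (auto intro!: nn_integral_cong simp: indicator_def)
  also have "(\<integral>\<^sup>+ h. \<Psi> h * indicator {[]} h \<partial>count_space UNIV) = \<Psi> []"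
    by (simp add: nn_integral_count_space_indicator[symmetric] nn_integral_count_space_finite)
  also have "(\<integral>\<^sup>+ h. \<Psi> h * indicator {h. h \<noteq> []} h \<partial>count_space UNIV)
      = (\<integral>\<^sup>+ h. \<Psi> h \<partial>count_space {h. h \<noteq> []})"
    by (simp add: nn_integral_count_space_indicator)
  also have "\<dots> = (\<integral>\<^sup>+ p. \<Psi> (case p of (x, h) \<Rightarrow> x # h) \<partial>count_space UNIV)"
    by (rule nn_integral_bij_count_space[symmetric])
      (auto simp: bij_betw_def inj_on_def image_iff neq_Nil_conv)
  also have "\<dots> = (\<integral>\<^sup>+ h. \<integral>\<^sup>+ x. \<Psi> (x # h) \<partial>count_space UNIV \<partial>count_space UNIV)"
    using nn_integral_snd_count_space[of "\<lambda>(x, h). \<Psi> (x # h)"] by (simp add: case_prod_beta')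
  finally show ?thesis .
qed

lemma nn_integral_list_by_length:
  fixes \<Psi> :: "'a list \<Rightarrow> ennreal"
  shows "(\<integral>\<^sup>+ h. \<Psi> h \<partial>count_space UNIV) = (\<Sum>n. \<integral>\<^sup>+ h\<in>{h. length h = n}. \<Psi> h \<partial>count_space UNIV)"
proof -
  have "(\<lambda>n. \<Psi> h * indicator {h. length h = n} h) sums \<Psi> h" for h
  proof -
    have "(\<lambda>n. \<Psi> h * indicator {h. length h = n} h) = (\<lambda>n. if n = length h then \<Psi> h else 0)"
      by (auto simp: fun_eq_iff indicator_def)
    then show ?thesis
      using sums_single[of "length h" "\<lambda>_. \<Psi> h"] by simp
  qed
  then have "(\<integral>\<^sup>+ h. \<Psi> h \<partial>count_space UNIV) = (\<integral>\<^sup>+ h. (\<Sum>n. \<Psi> h * indicator {h. length h = n} h) \<partial>count_space UNIV)"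
    by (simp add: sums_iff)
  also have "\<dots> = (\<Sum>n. \<integral>\<^sup>+ h\<in>{h. length h = n}. \<Psi> h \<partial>count_space UNIV)"
    by (rule nn_integral_suminf) simp
  finally show ?thesis .
qed

lemma nn_integral_length_Suc:
  fixes \<Psi> :: "'a list \<Rightarrow> ennreal"
  shows "(\<integral>\<^sup>+ h\<in>{h. length h = Suc n}. \<Psi> h \<partial>count_space UNIV)
       = (\<integral>\<^sup>+ h\<in>{h. length h = n}. (\<integral>\<^sup>+ x. \<Psi> (x # h) \<partial>count_space UNIV) \<partial>count_space UNIV)"
  by (subst nn_integral_list_Nil_Cons)
    (auto intro!: nn_integral_cong simp: indicator_def simp flip: nn_integral_multc)

lemma outcome_prob_nonneg: "0 \<le> outcome_prob S g c out"
  by (simp add: outcome_prob_def)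

lemma hist_prob_nonneg: "0 \<le> hist_prob S g \<sigma> h"
proof (induction h)
  case (Cons x h)
  then show ?case
    by (cases x) (simp add: outcome_prob_nonneg)
qed simp

lemma hist_prob_Cons:
  "hist_prob S g \<sigma> (x # h) = hist_prob S g \<sigma> h * pmf (\<sigma> h) (Run (fst x)) * outcome_prob S g (fst x) (snd x)"
  by (cases x) simp

definition layer_expectation :: "basis set \<Rightarrow> (nat \<Rightarrow> bool) \<Rightarrow> strategy \<Rightarrow> nat \<Rightarrow> (history \<Rightarrow> real) \<Rightarrow> ennreal" where
  "layer_expectation S g \<sigma> n \<phi> = (\<integral>\<^sup>+ h\<in>{h. length h = n}. ennreal (hist_prob S g \<sigma> h * \<phi> h) \<partial>count_space UNIV)"

lemma layer_expectation_0: "layer_expectation S g \<sigma> 0 \<phi> = ennreal (\<phi> [])"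
proof -
  have "layer_expectation S g \<sigma> 0 \<phi> = (\<integral>\<^sup>+ h. ennreal (hist_prob S g \<sigma> h * \<phi> h) * indicator {[]} h \<partial>count_space UNIV)"
    unfolding layer_expectation_def by (intro nn_integral_cong) (auto simp: indicator_def)
  then show ?thesis
    by (simp add: nn_integral_count_space_indicator[symmetric] nn_integral_count_space_finite)
qed

lemma layer_expectation_Suc:
  "layer_expectation S g \<sigma> (Suc n) \<phi>
     = (\<integral>\<^sup>+ h\<in>{h. length h = n}. ennreal (hist_prob S g \<sigma> h) *
          (\<integral>\<^sup>+ x. ennreal (pmf (\<sigma> h) (Run (fst x)) * outcome_prob S g (fst x) (snd x) * \<phi> (x # h))
             \<partial>count_space UNIV) \<partial>count_space UNIV)"
  unfolding layer_expectation_def nn_integral_length_Suc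
  by (intro nn_integral_cong)
    (simp add: hist_prob_Cons ennreal_mult' hist_prob_nonneg mult.assoc flip: nn_integral_cmult)

lemma layer_expectation_add:
  assumes "\<And>h. 0 \<le> \<phi> h" "\<And>h. 0 \<le> \<psi> h"
  shows "layer_expectation S g \<sigma> n (\<lambda>h. \<phi> h + \<psi> h) = layer_expectation S g \<sigma> n \<phi> + layer_expectation S g \<sigma> n \<psi>"
  unfolding layer_expectation_def using assms hist_prob_nonneg[of S g \<sigma>]
  by (subst nn_integral_add[symmetric]) (auto intro!: nn_integral_cong simp: distrib_left distrib_right ennreal_plus)

lemma layer_expectation_mult_const:
  assumes "0 \<le> c"
  shows "layer_expectation S g \<sigma> n (\<lambda>h. \<phi> h * c) = layer_expectation S g \<sigma> n \<phi> * ennreal c"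
  unfolding layer_expectation_def using assms
  by (subst nn_integral_multc[symmetric]) (auto intro!: nn_integral_cong simp: ennreal_mult' mult_ac)

definition round_size :: "nat \<Rightarrow> nat" where
  "round_size n = 2 ^ (n div 4)"

definition round_cost :: "nat \<Rightarrow> real" where
  "round_cost n = (\<Sum>j<round_size n. real j + 2) / round_size n"

text \<open>The check bit of the last measurement is set iff the measured seed is unmarked.\<close>
definition searching :: "history \<Rightarrow> bool" where
  "searching h \<longleftrightarrow> h = [] \<or> fst (snd (snd (hd h)))"

lemma searching_Nil [simp]: "searching []"
  by (simp add: searching_def)

lemma searching_Cons [simp]: "searching (x # h) \<longleftrightarrow> fst (snd (snd x))"
  by (simp add: searching_def)

lemma hist_cost_Cons [simp]: "hist_cost (x # h) = queries (fst x) + hist_cost h"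
  by (cases x) (simp add: hist_cost_def)

lemma round_size_pos: "0 < round_size n"
  by (simp add: round_size_def)

lemma round_cost_bounds: "0 \<le> round_cost n" "round_cost n \<le> 2 * 2 ^ (n div 4)"
proof -
  have "(\<Sum>j<round_size n. real j + 2) \<le> (\<Sum>j<round_size n. 2 * real (round_size n))"
  proof (intro sum_mono)
    fix j
    assume "j \<in> {..<round_size n}"
    then have "real j + 1 \<le> real (round_size n)"
      by simp
    then show "real j + 2 \<le> 2 * real (round_size n)"
      using round_size_pos[of n] by linarith
  qed
  then show "round_cost n \<le> 2 * 2 ^ (n div 4)"
    using round_size_pos[of n] by (simp add: round_cost_def field_simps) (simp add: round_size_def)
qed (simp add: round_cost_def sum_nonneg)

context grover_space
begin

definition grover_round :: "nat \<Rightarrow> action pmf" where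
  "grover_round n = map_pmf (\<lambda>j. Run (grover_circuit j)) (pmf_of_set {..<round_size n})"

definition grover_search :: strategy where
  "grover_search h = (if searching h then grover_round (length h) else return_pmf (Halt (fst (snd (hd h)))))"

lemma pmf_grover_round_Run:
  "pmf (grover_round n) (Run c) = (if c \<in> grover_circuit ` {..<round_size n} then 1 / round_size n else 0)"
proof (cases "c \<in> range grover_circuit")
  case True
  then obtain j where c: "c = grover_circuit j"
    by auto
  have "inj (\<lambda>j. Run (grover_circuit j))"
    using inj_grover_circuit by (simp add: inj_def)
  then have "pmf (grover_round n) (Run c) = pmf (pmf_of_set {..<round_size n}) j"
    unfolding grover_round_def c by (rule pmf_map_inj')
  also have "\<dots> = (if j < round_size n then 1 / round_size n else 0)"
    using round_size_pos[of n] by (subst pmf_of_set) (auto simp: indicator_def)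
  finally show ?thesis
    using inj_grover_circuit by (auto simp: c inj_eq)
next
  case False
  then have "Run c \<notin> set_pmf (grover_round n)"
    by (auto simp: grover_round_def)
  then show ?thesis
    using False by (auto simp: pmf_eq_0_set_pmf)
qed

lemma pmf_grover_round_Halt: "pmf (grover_round n) (Halt r) = 0"
  by (auto simp: pmf_eq_0_set_pmf grover_round_def)

lemma valid_grover_search: "valid_strategy reg grover_search"
  unfolding valid_strategy_def
proof (intro allI impI)
  fix h c
  assume "pmf (grover_search h) (Run c) > 0"
  then have "c \<in> range grover_circuit"
    by (auto simp: grover_search_def pmf_grover_round_Run split: if_splits)
  then show "valid_circuit reg c"
    using valid_grover_circuit by auto
qed

definition round_expectation :: "(nat \<Rightarrow> bool) \<Rightarrow> nat \<Rightarrow> (circuit \<times> basis \<Rightarrow> real) \<Rightarrow> real" where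
  "round_expectation g n \<psi> = (\<Sum>j<round_size n. \<Sum>out\<in>reg.
     outcome_prob reg g (grover_circuit j) out * \<psi> (grover_circuit j, out)) / round_size n"

lemma outcome_prob_grover_circuit_outside: "out \<notin> reg \<Longrightarrow> outcome_prob reg g (grover_circuit j) out = 0"
  by (cases out) (auto simp: outcome_prob_grover_circuit)

lemma nn_integral_grover_round:
  assumes "\<And>x. 0 \<le> \<psi> x"
  shows "(\<integral>\<^sup>+ x. ennreal (pmf (grover_round n) (Run (fst x)) * outcome_prob reg g (fst x) (snd x) * \<psi> x)
            \<partial>count_space UNIV) = ennreal (round_expectation g n \<psi>)"
proof -
  define F where "F x = ennreal (pmf (grover_round n) (Run (fst x)) * outcome_prob reg g (fst x) (snd x) * \<psi> x)" for x
  have "(\<integral>\<^sup>+ x. F x \<partial>count_space UNIV) = (\<integral>\<^sup>+ c. \<integral>\<^sup>+ out. F (c, out) \<partial>count_space UNIV \<partial>count_space UNIV)"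
    by (rule nn_integral_fst_count_space[symmetric])
  also have "\<dots> = (\<Sum>c\<in>grover_circuit ` {..<round_size n}. \<integral>\<^sup>+ out. F (c, out) \<partial>count_space UNIV)"
    by (rule nn_integral_count_space') (auto simp: F_def pmf_grover_round_Run)
  also have "\<dots> = (\<Sum>j<round_size n. \<integral>\<^sup>+ out. F (grover_circuit j, out) \<partial>count_space UNIV)"
    using inj_grover_circuit by (subst sum.reindex) (auto intro: inj_on_subset)
  also have "\<dots> = (\<Sum>j<round_size n. \<Sum>out\<in>reg. F (grover_circuit j, out))"
  proof (rule sum.cong[OF refl])
    fix j
    show "(\<integral>\<^sup>+ out. F (grover_circuit j, out) \<partial>count_space UNIV) = (\<Sum>out\<in>reg. F (grover_circuit j, out))"
      by (rule nn_integral_count_space'[OF finite_qcarrier[OF finite_R]])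
        (simp_all add: F_def outcome_prob_grover_circuit_outside)
  qed
  also have "\<dots> = (\<Sum>j<round_size n. \<Sum>out\<in>reg.
      ennreal (outcome_prob reg g (grover_circuit j) out * \<psi> (grover_circuit j, out) / round_size n))"
    by (intro sum.cong refl) (simp add: F_def pmf_grover_round_Run inj_image_mem_iff[OF inj_grover_circuit])
  also have "\<dots> = ennreal (round_expectation g n \<psi>)"
    using assms by (simp add: round_expectation_def sum_divide_distrib sum_nonneg outcome_prob_nonneg)
  finally show ?thesis
    by (simp add: F_def)
qed

lemma layer_expectation_grover_search_Suc:
  assumes "\<And>h. 0 \<le> \<phi> h"
  shows "layer_expectation reg g grover_search (Suc n) \<phi>
       = layer_expectation reg g grover_search n (\<lambda>h. of_bool (searching h) * round_expectation g n (\<lambda>x. \<phi> (x # h)))"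
proof -
  have "(\<integral>\<^sup>+ x. ennreal (pmf (grover_search h) (Run (fst x)) * outcome_prob reg g (fst x) (snd x) * \<phi> (x # h))
         \<partial>count_space UNIV) = ennreal (of_bool (searching h) * round_expectation g (length h) (\<lambda>x. \<phi> (x # h)))"
    for h
    using assms by (simp add: grover_search_def nn_integral_grover_round)
  then show ?thesis
    unfolding layer_expectation_Suc unfolding layer_expectation_def
    by (intro nn_integral_cong) (auto simp: indicator_def ennreal_mult' hist_prob_nonneg)
qed

definition success_prob :: "(nat \<Rightarrow> bool) \<Rightarrow> nat \<Rightarrow> real" where
  "success_prob g n = (\<Sum>j<round_size n. (sin ((2 * real j + 1) * grover_angle g))\<^sup>2) / round_size n"

lemma success_prob_bounds: "0 \<le> success_prob g n" "success_prob g n \<le> 1"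
proof -
  have "(\<Sum>j<round_size n. (sin ((2 * real j + 1) * grover_angle g))\<^sup>2) \<le> (\<Sum>j<round_size n. 1)"
    by (intro sum_mono) (simp add: abs_square_le_1)
  then show "success_prob g n \<le> 1"
    using round_size_pos[of n] by (simp add: success_prob_def)
qed (simp add: success_prob_def sum_nonneg)

lemma round_expectation_diff:
  "round_expectation g n (\<lambda>x. \<psi> x - \<eta> x) = round_expectation g n \<psi> - round_expectation g n \<eta>"
  by (simp add: round_expectation_def algebra_simps sum_subtractf diff_divide_distrib)

lemma round_expectation_circuit:
  "round_expectation g n (\<lambda>x. f (fst x)) = (\<Sum>j<round_size n. f (grover_circuit j)) / round_size n"
  by (simp add: round_expectation_def total_mass_grover_circuit flip: sum_distrib_right)

lemma round_expectation_found:
  "round_expectation g n (\<lambda>x. of_bool (\<not> fst (snd (snd x)))) = success_prob g n"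
  by (simp add: round_expectation_def success_prob_def marked_mass_grover_circuit)

lemma round_expectation_searching:
  "round_expectation g n (\<lambda>x. of_bool (fst (snd (snd x)))) = 1 - success_prob g n"
proof -
  have "round_expectation g n (\<lambda>x. of_bool (fst (snd (snd x))))
      = round_expectation g n (\<lambda>x. 1 - of_bool (\<not> fst (snd (snd x))))"
    by (rule arg_cong[where f = "round_expectation g n"]) (simp add: fun_eq_iff)
  also have "\<dots> = 1 - success_prob g n"
    using round_expectation_circuit[of g n "\<lambda>_. 1"] round_size_pos[of n]
    by (simp add: round_expectation_diff round_expectation_found)
  finally show ?thesis .
qed

lemma round_expectation_cost:
  "round_expectation g n (\<lambda>x. real (queries (fst x)) + real k) = round_cost n + real k"
  unfolding round_expectation_circuit[of g n "\<lambda>c. real (queries c) + real k"]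
  using round_size_pos[of n]
  by (simp add: queries_grover_circuit round_cost_def sum.distrib add_divide_distrib algebra_simps)

lemma survival_nonneg: "0 \<le> (\<Prod>k<n. 1 - success_prob g k)"
  using success_prob_bounds by (intro prod_nonneg) (simp add: algebra_simps)

lemma layer_searching:
  "layer_expectation reg g grover_search n (\<lambda>h. of_bool (searching h)) = ennreal (\<Prod>k<n. 1 - success_prob g k)"
proof (induction n)
  case 0
  then show ?case
    by (simp add: layer_expectation_0)
next
  case (Suc n)
  have "layer_expectation reg g grover_search (Suc n) (\<lambda>h. of_bool (searching h))
      = layer_expectation reg g grover_search n (\<lambda>h. of_bool (searching h)) * ennreal (1 - success_prob g n)"
    using success_prob_bounds[of g n]
    by (simp add: layer_expectation_grover_search_Suc round_expectation_searching layer_expectation_mult_const)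
  then show ?case
    by (simp add: Suc ennreal_mult' survival_nonneg)
qed

lemma layer_found_Suc:
  "layer_expectation reg g grover_search (Suc n) (\<lambda>h. of_bool (\<not> searching h))
     = ennreal ((\<Prod>k<n. 1 - success_prob g k) * success_prob g n)"
  using success_prob_bounds[of g n]
  by (simp add: layer_expectation_grover_search_Suc round_expectation_found layer_expectation_mult_const
      layer_searching ennreal_mult' survival_nonneg)

lemma layer_cost_Suc:
  "layer_expectation reg g grover_search (Suc n) (\<lambda>h. real (hist_cost h))
     = layer_expectation reg g grover_search n (\<lambda>h. of_bool (searching h)) * ennreal (round_cost n)
       + layer_expectation reg g grover_search n (\<lambda>h. of_bool (searching h) * real (hist_cost h))"
proof -
  have "layer_expectation reg g grover_search (Suc n) (\<lambda>h. real (hist_cost h))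
      = layer_expectation reg g grover_search n
          (\<lambda>h. of_bool (searching h) * round_cost n + of_bool (searching h) * real (hist_cost h))"
    by (simp add: layer_expectation_grover_search_Suc round_expectation_cost distrib_left)
  also have "\<dots> = layer_expectation reg g grover_search n (\<lambda>h. of_bool (searching h)) * ennreal (round_cost n)
       + layer_expectation reg g grover_search n (\<lambda>h. of_bool (searching h) * real (hist_cost h))"
    using round_cost_bounds(1)[of n]
    by (simp add: layer_expectation_add layer_expectation_mult_const)
  finally show ?thesis .
qed

lemma layer_cost_partial_sum:
  "(\<Sum>k<Suc n. layer_expectation reg g grover_search k (\<lambda>h. of_bool (\<not> searching h) * real (hist_cost h)))
     + layer_expectation reg g grover_search n (\<lambda>h. of_bool (searching h) * real (hist_cost h))
   = ennreal (\<Sum>k<n. (\<Prod>i<k. 1 - success_prob g i) * round_cost k)"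
proof (induction n)
  case 0
  then show ?case
    by (simp add: layer_expectation_0 hist_cost_def)
next
  case (Suc n)
  let ?L = "layer_expectation reg g grover_search"
  have "?L (Suc n) (\<lambda>h. of_bool (\<not> searching h) * real (hist_cost h))
      + ?L (Suc n) (\<lambda>h. of_bool (searching h) * real (hist_cost h))
      = ?L (Suc n) (\<lambda>h. of_bool (\<not> searching h) * real (hist_cost h) + of_bool (searching h) * real (hist_cost h))"
    by (rule layer_expectation_add[symmetric]) simp_all
  also have "(\<lambda>h. of_bool (\<not> searching h) * real (hist_cost h) + of_bool (searching h) * real (hist_cost h))
      = (\<lambda>h. real (hist_cost h))"
    by (simp add: fun_eq_iff)
  finally have "(\<Sum>k<Suc (Suc n). ?L k (\<lambda>h. of_bool (\<not> searching h) * real (hist_cost h)))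
      + ?L (Suc n) (\<lambda>h. of_bool (searching h) * real (hist_cost h))
      = ((\<Sum>k<Suc n. ?L k (\<lambda>h. of_bool (\<not> searching h) * real (hist_cost h)))
         + ?L n (\<lambda>h. of_bool (searching h) * real (hist_cost h)))
        + ?L n (\<lambda>h. of_bool (searching h)) * ennreal (round_cost n)"
    by (simp add: layer_cost_Suc add_ac)
  also have "\<dots> = ennreal (\<Sum>k<n. (\<Prod>i<k. 1 - success_prob g i) * round_cost k)
      + ennreal (\<Prod>k<n. 1 - success_prob g k) * ennreal (round_cost n)"
    by (simp only: Suc.IH layer_searching)
  also have "\<dots> = ennreal (\<Sum>k<Suc n. (\<Prod>i<k. 1 - success_prob g i) * round_cost k)"
    using round_cost_bounds(1) survival_nonneg
    by (simp add: ennreal_mult' sum_nonneg mult_nonneg_nonneg)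
  finally show ?case .
qed

lemma nn_integral_halt_prob_grover_search:
  assumes "\<And>h. 0 \<le> X h"
  shows "(\<integral>\<^sup>+ hr. ennreal (halt_prob reg g grover_search (fst hr) (snd hr) * X (fst hr)) \<partial>count_space UNIV)
       = (\<Sum>n. layer_expectation reg g grover_search n (\<lambda>h. of_bool (\<not> searching h) * X h))"
proof -
  have inner: "(\<integral>\<^sup>+ r. ennreal (halt_prob reg g grover_search h r * X h) \<partial>count_space UNIV)
      = ennreal (hist_prob reg g grover_search h * (of_bool (\<not> searching h) * X h))" for h
  proof (cases "searching h")
    case False
    have "(\<integral>\<^sup>+ r. ennreal (halt_prob reg g grover_search h r * X h) \<partial>count_space UNIV)
        = (\<integral>\<^sup>+ r. ennreal (hist_prob reg g grover_search h * X h) * indicator {fst (snd (hd h))} r \<partial>count_space UNIV)"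
      using False by (intro nn_integral_cong) (auto simp: halt_prob_def grover_search_def indicator_def)
    then show ?thesis
      using False by (simp add: nn_integral_count_space_indicator[symmetric] nn_integral_count_space_finite)
  qed (simp add: halt_prob_def grover_search_def pmf_grover_round_Halt)
  have "(\<integral>\<^sup>+ hr. ennreal (halt_prob reg g grover_search (fst hr) (snd hr) * X (fst hr)) \<partial>count_space UNIV)
      = (\<integral>\<^sup>+ h. \<integral>\<^sup>+ r. ennreal (halt_prob reg g grover_search h r * X h) \<partial>count_space UNIV \<partial>count_space UNIV)"
    using nn_integral_fst_count_space[of "\<lambda>hr. ennreal (halt_prob reg g grover_search (fst hr) (snd hr) * X (fst hr))"]
    by simp
  also have "\<dots> = (\<Sum>n. layer_expectation reg g grover_search n (\<lambda>h. of_bool (\<not> searching h) * X h))"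
    unfolding inner layer_expectation_def by (rule nn_integral_list_by_length)
  finally show ?thesis .
qed

lemma halt_prob_pos_imp_marked:
  assumes "0 < halt_prob reg g grover_search h r"
  shows "r \<in> R \<and> g r"
proof -
  have hp: "0 < hist_prob reg g grover_search h" "0 < pmf (grover_search h) (Halt r)"
    using assms hist_prob_nonneg[of reg g grover_search h] pmf_nonneg[of "grover_search h" "Halt r"]
    by (auto simp: halt_prob_def zero_less_mult_iff)
  then have "\<not> searching h"
    by (auto simp: grover_search_def pmf_grover_round_Halt)
  then obtain x h' where h: "h = x # h'"
    by (cases h) (auto simp: searching_def)
  obtain c r' b w where x: "x = (c, r', b, w)"
    by (cases x)
  have "\<not> b" "r = r'"
    using \<open>\<not> searching h\<close> hp(2) by (auto simp: h x grover_search_def indicator_def split: if_splits)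
  have "0 < pmf (grover_search h') (Run c)" "0 < outcome_prob reg g c (r', b, w)"
    using hp(1) hist_prob_nonneg[of reg g grover_search h'] pmf_nonneg[of "grover_search h'" "Run c"]
      outcome_prob_nonneg[of reg g c "(r', b, w)"]
    by (auto simp: h x zero_less_mult_iff)
  moreover from this(1) obtain j where "c = grover_circuit j"
    by (auto simp: grover_search_def pmf_grover_round_Run split: if_splits)
  ultimately show ?thesis
    using \<open>\<not> b\<close> \<open>r = r'\<close> by (auto simp: outcome_prob_grover_circuit split: if_splits)
qed

lemma sin_grover_angle_pos: "0 < card {r\<in>R. g r} \<Longrightarrow> 0 < sin (grover_angle g)"
  using card_R_pos by (simp add: sin_grover_angle)

lemma success_prob_ge_quarter:
  assumes "0 < card {r\<in>R. g r}" "1 \<le> 2 ^ s * sin (grover_angle g)" "4 * s \<le> n"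
  shows "1 / 4 \<le> success_prob g n"
proof -
  have "0 < grover_angle g"
    using sin_grover_angle_pos[OF assms(1)] grover_angle_bounds(1)[of g] by (cases "grover_angle g = 0") auto
  have "(2::real) ^ s \<le> round_size n"
    using assms(3) by (simp add: round_size_def power_increasing)
  then have "1 \<le> real (round_size n) * sin (grover_angle g)"
    using assms(2) sin_grover_angle_pos[OF assms(1)] by (smt (verit) mult_right_mono)
  then have "real (round_size n) / 4 \<le> (\<Sum>j<round_size n. (sin ((2 * real j + 1) * grover_angle g))\<^sup>2)"
    using \<open>0 < grover_angle g\<close> grover_angle_bounds(2) by (intro sum_sin_sq_odd_ge_quarter)
  then show ?thesis
    using round_size_pos[of n] by (simp add: success_prob_def field_simps)
qed

lemma grover_search_finds:
  assumes "0 < card {r\<in>R. g r}"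
  shows "finds R reg g grover_search"
proof -
  obtain s where s: "1 \<le> 2 ^ s * sin (grover_angle g)"
    using exists_power_of_two_scaling[OF sin_grover_angle_pos[OF assms] sin_le_one] by blast
  define l where "l n = (case n of 0 \<Rightarrow> 0 | Suc m \<Rightarrow> (\<Prod>k<m. 1 - success_prob g k) * success_prob g m)" for n
  have l_nonneg: "0 \<le> l n" for n
    by (cases n) (simp_all add: l_def survival_nonneg success_prob_bounds)
  have "(\<lambda>n. \<Sum>k<Suc n. l k) = (\<lambda>n. 1 - (\<Prod>k<n. 1 - success_prob g k))"
    by (simp add: l_def sum.lessThan_Suc_shift prod_one_minus_telescope del: sum.lessThan_Suc)
  moreover have "(\<lambda>n. \<Prod>k<n. 1 - success_prob g k) \<longlonglongrightarrow> 0"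
    using success_prob_bounds success_prob_ge_quarter[OF assms s]
    by (intro prod_one_minus_LIMSEQ_zero[where n\<^sub>0 = "4 * s" and q = "1 / 4"]) auto
  ultimately have "(\<lambda>n. \<Sum>k<Suc n. l k) \<longlonglongrightarrow> 1"
    using tendsto_diff[OF tendsto_const[of 1]] by fastforce
  then have "l sums 1"
    unfolding sums_def by (rule LIMSEQ_imp_Suc)
  then have "(\<lambda>n. ennreal (l n)) sums 1"
    using l_nonneg by (subst sums_ennreal[where x = 1, simplified]) auto
  moreover have "layer_expectation reg g grover_search n (\<lambda>h. of_bool (\<not> searching h)) = ennreal (l n)" for n
    by (cases n) (simp_all add: l_def layer_expectation_0 layer_found_Suc)
  ultimately have "(\<integral>\<^sup>+ hr. ennreal (halt_prob reg g grover_search (fst hr) (snd hr)) \<partial>count_space UNIV) = 1"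
    using nn_integral_halt_prob_grover_search[of "\<lambda>_. 1"] by (simp add: sums_iff)
  then show ?thesis
    unfolding finds_def using halt_prob_pos_imp_marked by blast
qed

lemma expected_queries_grover_search_le_power:
  assumes "0 < card {r\<in>R. g r}" "1 \<le> 2 ^ s * sin (grover_angle g)"
  shows "expected_queries reg g grover_search \<le> ennreal (28 * 2 ^ s)"
proof -
  let ?L = "layer_expectation reg g grover_search"
  have "expected_queries reg g grover_search = (\<Sum>n. ?L n (\<lambda>h. of_bool (\<not> searching h) * real (hist_cost h)))"
    unfolding expected_queries_def by (rule nn_integral_halt_prob_grover_search) simp
  also have "\<dots> \<le> ennreal (28 * 2 ^ s)"
  proof (rule suminf_le_const)
    fix n
    have "(\<Sum>k<n. ?L k (\<lambda>h. of_bool (\<not> searching h) * real (hist_cost h)))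
        \<le> (\<Sum>k<Suc n. ?L k (\<lambda>h. of_bool (\<not> searching h) * real (hist_cost h)))
          + ?L n (\<lambda>h. of_bool (searching h) * real (hist_cost h))"
      by (simp add: add.assoc add_increasing2)
    also have "\<dots> = ennreal (\<Sum>k<n. (\<Prod>i<k. 1 - success_prob g i) * round_cost k)"
      by (rule layer_cost_partial_sum)
    also have "\<dots> \<le> ennreal (28 * 2 ^ s)"
      using success_prob_bounds success_prob_ge_quarter[OF assms] round_cost_bounds
      by (intro ennreal_leI restart_cost_le) auto
    finally show "(\<Sum>k<n. ?L k (\<lambda>h. of_bool (\<not> searching h) * real (hist_cost h))) \<le> ennreal (28 * 2 ^ s)" .
  qed simp
  finally show ?thesis .
qed

lemma expected_queries_grover_search:
  assumes "0 < card {r\<in>R. g r}"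
  shows "expected_queries reg g grover_search \<le> ennreal (56 * sqrt (card R / card {r\<in>R. g r}))"
proof -
  obtain s where s: "1 \<le> 2 ^ s * sin (grover_angle g)" "2 ^ s * sin (grover_angle g) < 2"
    using exists_power_of_two_scaling[OF sin_grover_angle_pos[OF assms] sin_le_one] by blast
  have "28 * 2 ^ s \<le> 56 / sin (grover_angle g)"
    using s(2) sin_grover_angle_pos[OF assms] by (simp add: field_simps)
  also have "\<dots> = 56 * sqrt (card R / card {r\<in>R. g r})"
    by (simp add: sin_grover_angle real_sqrt_divide)
  finally show ?thesis
    using expected_queries_grover_search_le_power[OF assms s(1)] order_trans ennreal_leI by blast
qed

lemma average_expected_queries_le:
  assumes P: "\<And>f. f \<in> F \<Longrightarrow> 0 \<le> P f" "(\<Sum>f\<in>F. P f) = 1"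
    and marked: "\<And>f. f \<in> F \<Longrightarrow> 0 < P f \<Longrightarrow> 0 < card {r\<in>R. g f r}"
  shows "(\<Sum>f\<in>F. ennreal (P f) * expected_queries reg (g f) grover_search)
           \<le> ennreal (56 * sqrt (\<Sum>f\<in>F. P f * real (card R) / real (card {r\<in>R. g f r})))"
proof -
  have "(\<Sum>f\<in>F. ennreal (P f) * expected_queries reg (g f) grover_search)
      \<le> (\<Sum>f\<in>F. ennreal (56 * (P f * sqrt (card R / card {r\<in>R. g f r}))))"
  proof (rule sum_mono)
    fix f
    assume "f \<in> F"
    show "ennreal (P f) * expected_queries reg (g f) grover_search \<le> ennreal (56 * (P f * sqrt (card R / card {r\<in>R. g f r})))"
    proof (cases "P f = 0")
      case False
      then have "0 < P f"
        using P(1)[OF \<open>f \<in> F\<close>] by simp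
      then have "ennreal (P f) * expected_queries reg (g f) grover_search
          \<le> ennreal (P f) * ennreal (56 * sqrt (card R / card {r\<in>R. g f r}))"
        using marked[OF \<open>f \<in> F\<close>] by (intro mult_left_mono expected_queries_grover_search) auto
      then show ?thesis
        using P(1) \<open>f \<in> F\<close> by (simp add: ennreal_mult' mult.left_commute)
    qed simp
  qed
  also have "\<dots> = ennreal (56 * (\<Sum>f\<in>F. P f * sqrt (card R / card {r\<in>R. g f r})))"
    using P(1) by (simp add: sum_distrib_left)
  also have "\<dots> \<le> ennreal (56 * sqrt (\<Sum>f\<in>F. P f * (card R / card {r\<in>R. g f r})))"
    using P by (intro ennreal_leI mult_left_mono sum_weighted_sqrt_le_sqrt_sum) auto
  finally show ?thesis
    by simp
qed

end

theorem exists_grover_search_strategy: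
  fixes R :: "nat set" and g :: "'a \<Rightarrow> nat \<Rightarrow> bool"
  assumes "finite R" and P: "\<And>f. f \<in> F \<Longrightarrow> 0 \<le> P f" "(\<Sum>f\<in>F. P f) = 1"
    and marked: "\<And>f. f \<in> F \<Longrightarrow> 0 < P f \<Longrightarrow> 0 < card {r\<in>R. g f r}"
  shows "\<exists>\<sigma>. valid_strategy (qcarrier R (Suc 0)) \<sigma> \<and>
           (\<forall>f\<in>F. 0 < P f \<longrightarrow> finds R (qcarrier R (Suc 0)) (g f) \<sigma>) \<and>
           (\<Sum>f\<in>F. ennreal (P f) * expected_queries (qcarrier R (Suc 0)) (g f) \<sigma>)
             \<le> ennreal (56 * sqrt (\<Sum>f\<in>F. P f * real (card R) / real (card {r\<in>R. g f r})))"
proof -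
  have "\<exists>f\<in>F. 0 < P f"
  proof (rule ccontr)
    assume "\<not> (\<exists>f\<in>F. 0 < P f)"
    then have "(\<Sum>f\<in>F. P f) \<le> 0"
      by (intro sum_nonpos) (simp add: not_less)
    then show False
      using P(2) by simp
  qed
  then have "R \<noteq> {}"
    using marked by (auto simp: card_gt_0_iff)
  then interpret grover_space R
    using \<open>finite R\<close> by unfold_locales
  show ?thesis
  proof (intro exI[of _ grover_search] conjI ballI impI)
    show "valid_strategy reg grover_search"
      by (rule valid_grover_search)
    show "finds R reg (g f) grover_search" if "f \<in> F" "0 < P f" for f
      using marked[OF that] by (rule grover_search_finds)
    show "(\<Sum>f\<in>F. ennreal (P f) * expected_queries reg (g f) grover_search)
        \<le> ennreal (56 * sqrt (\<Sum>f\<in>F. P f * real (card R) / real (card {r\<in>R. g f r})))"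
      using average_expected_queries_le[OF P, where g = g] marked by simp
  qed
qed

theorem theorem4:
  shows "\<exists>c>0. \<forall>(X::nat set) (R::nat set) (F::(nat \<Rightarrow> bool) set) (P::(nat \<Rightarrow> bool) \<Rightarrow> real)
            (G::(nat \<Rightarrow> bool) \<Rightarrow> nat \<Rightarrow> nat).
     finite X \<and> finite R \<and> finite F \<and>
     (\<forall>f\<in>F. \<forall>x. x \<notin> X \<longrightarrow> \<not> f x) \<and>
     (\<forall>f\<in>F. P f \<ge> 0) \<and> (\<Sum>f\<in>F. P f) = 1 \<and>
     (\<forall>f\<in>F. \<forall>r\<in>R. G f r \<in> X) \<and>
     (\<forall>f\<in>F. P f > 0 \<longrightarrow> card {r\<in>R. f (G f r)} > 0)
     \<longrightarrow>
     (\<exists>(m::nat) (\<sigma>::strategy).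
        valid_strategy (qcarrier R m) \<sigma> \<and>
        (\<forall>f\<in>F. P f > 0 \<longrightarrow> finds R (qcarrier R m) (\<lambda>r. f (G f r)) \<sigma>) \<and>
        (\<Sum>f\<in>F. ennreal (P f) * expected_queries (qcarrier R m) (\<lambda>r. f (G f r)) \<sigma>)
          \<le> ennreal (c * sqrt (\<Sum>f\<in>F. P f * real (card R) / real (card {r\<in>R. f (G f r)}))))"
  by (intro exI[of _ "56::real"] conjI allI impI exI[of _ "Suc 0"] exists_grover_search_strategy) auto

end
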